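(* Let $n \ge 1$ and $k \in \{1, \ldots, n\}$, with red tanks $R_1, \ldots, R_n$ each initially containing $1$ unit and blue tanks $B_1, \ldots, B_n$ initially empty. After running the moving window strategy (for $i = 1, \ldots, n-k+1$ in order, for $j = i, \ldots, i+k-1$ in order, equilibrate $R_i$ and $B_j$), the total amount of water in the red tanks is at most \[ \frac{n-k+1}{k+1} + (k-1). \] In particular, for $k = \lfloor \sqrt{n+2} \rfloor$ this total is strictly less than $2\sqrt{n}$.
   Context: Equilibrating two tanks $a \neq b$ with water levels $x_a, x_b$ replaces both levels by $\frac{x_a+x_b}{2}$ and leaves all other tanks unchanged. *)

theory Defs
  imports Complex_Main
begin

datatype tank = Red nat | Blue nat

type_synonym state = "tank \<Rightarrow> real"

definition equilibrate :: "state \<Rightarrow> tank \<Rightarrow> tank \<Rightarrow> state" where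
  "equilibrate s a b = s(a := (s a + s b) / 2, b := (s a + s b) / 2)"

definition init_state :: "nat \<Rightarrow> state" where
  "init_state n = (\<lambda>t. case t of Red i \<Rightarrow> (if 1 \<le> i \<and> i \<le> n then 1 else 0) | Blue j \<Rightarrow> 0)"

definition moving_window_ops :: "nat \<Rightarrow> nat \<Rightarrow> (tank \<times> tank) list" where
  "moving_window_ops n k =
     concat (map (\<lambda>i. map (\<lambda>j. (Red i, Blue j)) [i..<i+k]) [1..<n-k+2])"

definition run_ops :: "state \<Rightarrow> (tank \<times> tank) list \<Rightarrow> state" where
  "run_ops s ops = foldl (\<lambda>st p. equilibrate st (fst p) (snd p)) s ops"

definition moving_window :: "nat \<Rightarrow> nat \<Rightarrow> state" where
  "moving_window n k = run_ops (init_state n) (moving_window_ops n k)"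

definition red_total :: "nat \<Rightarrow> state \<Rightarrow> real" where
  "red_total n s = (\<Sum>i = 1..n. s (Red i))"

end

theory Submission
  imports Defs
begin

text \<open>When the window of R_i is processed, the blue tank B_(i+l-1) (l = 1..k) holds at most
  (k-l)/(k+1), left over from earlier windows, while R_i, having been averaged with
  the previous l-1 tanks, holds at most (k+2-l)/(k+1). Equilibrating them leaves both at most
  (k+1-l)/(k+1), which is the same bound shifted by one tank for the next window. So every
  processed red tank ends with at most 1/(k+1), and the k-1 untouched ones keep 1 unit.
  For k = floor(sqrt(n+2)), with r = sqrt(n+2) and x = k+1, the bound equals r^2/x + x - 3
  with r < x \<le> r+1; as r^2/x + x is convex, it is at most 2r+1 there, and r < sqrt n + 1.\<close>

lemma equilibrate_apply:
  "equilibrate s a b c = (if c = a \<or> c = b then (s a + s b) / 2 else s c)"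
  by (simp add: equilibrate_def)

lemma run_ops_Cons: "run_ops s (p # ops) = run_ops (equilibrate s (fst p) (snd p)) ops"
  by (simp add: run_ops_def)

lemma run_ops_append: "run_ops s (xs @ ys) = run_ops (run_ops s xs) ys"
  by (simp add: run_ops_def)

lemma run_ops_snoc: "run_ops s (xs @ [p]) = equilibrate (run_ops s xs) (fst p) (snd p)"
  by (simp add: run_ops_def)

lemma run_ops_unchanged:
  assumes "\<forall>(a, b) \<in> set ops. c \<noteq> a \<and> c \<noteq> b"
  shows "run_ops s ops c = s c"
  using assms
proof (induction ops arbitrary: s)
  case Nil
  then show ?case by (simp add: run_ops_def)
next
  case (Cons p ops)
  then show ?case by (cases p) (simp add: run_ops_Cons equilibrate_apply)
qed

definition row_ops :: "nat \<Rightarrow> nat \<Rightarrow> (tank \<times> tank) list" where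
  "row_ops i m = map (\<lambda>j. (Red i, Blue j)) [i..<i + m]"

lemma row_ops_Suc: "row_ops i (Suc m) = row_ops i m @ [(Red i, Blue (i + m))]"
  by (simp add: row_ops_def)

lemma set_row_ops: "set (row_ops i m) = {(Red i, Blue j) | j. i \<le> j \<and> j < i + m}"
  by (auto simp: row_ops_def)

lemma run_row_ops_le:
  fixes k :: nat
  assumes "s (Red i) \<le> 1"
    and "\<And>j. i \<le> j \<Longrightarrow> j < i + m \<Longrightarrow> s (Blue j) \<le> (real (i + k) - real j - 1) / (real k + 1)"
  shows "run_ops s (row_ops i m) (Red i) \<le> (real k + 1 - real m) / (real k + 1)
    \<and> (\<forall>j. i \<le> j \<and> j < i + m \<longrightarrow> run_ops s (row_ops i m) (Blue j) \<le> (real (i + k) - real j) / (real k + 1))"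
  using assms(2)
proof (induction m)
  case 0
  then show ?case using assms(1) by (simp add: row_ops_def run_ops_def)
next
  case (Suc m)
  define s' where "s' = run_ops s (row_ops i m)"
  have IH: "s' (Red i) \<le> (real k + 1 - real m) / (real k + 1)"
    "\<And>j. i \<le> j \<Longrightarrow> j < i + m \<Longrightarrow> s' (Blue j) \<le> (real (i + k) - real j) / (real k + 1)"
    using Suc by (auto simp: s'_def)
  have "s' (Blue (i + m)) = s (Blue (i + m))"
    unfolding s'_def by (rule run_ops_unchanged) (auto simp: set_row_ops)
  also have "\<dots> \<le> (real k - real m - 1) / (real k + 1)"
    using Suc.prems[of "i + m"] by simp
  finally have "(s' (Red i) + s' (Blue (i + m))) / 2 \<le> (real k + 1 - real (Suc m)) / (real k + 1)"
    using IH(1) by (simp add: field_simps)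
  then show ?case
    using IH(2) by (auto simp: s'_def row_ops_Suc run_ops_snoc equilibrate_apply less_Suc_eq)
qed

text \<open>Bounds valid once the windows of R_1, ..., R_q have been processed; the max with 0
  covers the blue tanks B_j, j \<ge> q + k, that no window has reached yet.\<close>
definition window_invariant :: "nat \<Rightarrow> nat \<Rightarrow> state \<Rightarrow> bool" where
  "window_invariant k q s \<longleftrightarrow>
     (\<forall>i. 1 \<le> i \<and> i \<le> q \<longrightarrow> s (Red i) \<le> 1 / (real k + 1)) \<and>
     (\<forall>i. q < i \<longrightarrow> s (Red i) \<le> 1) \<and>
     (\<forall>j. q < j \<longrightarrow> s (Blue j) \<le> max 0 ((real (q + k) - real j) / (real k + 1)))"

lemma window_invariant_init: "window_invariant k 0 (init_state n)"
  by (simp add: window_invariant_def init_state_def)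

lemma window_invariant_step:
  assumes inv: "window_invariant k q s"
  shows "window_invariant k (Suc q) (run_ops s (row_ops (Suc q) k))"
proof -
  define s' where "s' = run_ops s (row_ops (Suc q) k)"
  have "s (Red (Suc q)) \<le> 1"
    using inv by (simp add: window_invariant_def)
  moreover have "s (Blue j) \<le> (real (Suc q + k) - real j - 1) / (real k + 1)"
    if "Suc q \<le> j" "j < Suc q + k" for j
  proof -
    have "s (Blue j) \<le> max 0 ((real (q + k) - real j) / (real k + 1))"
      using inv \<open>Suc q \<le> j\<close> unfolding window_invariant_def by simp
    also have "\<dots> = (real (Suc q + k) - real j - 1) / (real k + 1)"
      using that by (auto simp: max_def)
    finally show ?thesis .
  qed
  ultimately have sweep: "s' (Red (Suc q)) \<le> 1 / (real k + 1)"
    "\<And>j. Suc q \<le> j \<Longrightarrow> j < Suc q + k \<Longrightarrow> s' (Blue j) \<le> (real (Suc q + k) - real j) / (real k + 1)"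
    using run_row_ops_le[of s "Suc q" k k] by (simp_all add: s'_def)
  have unchanged: "s' t = s t"
    if "t \<noteq> Red (Suc q)" "\<And>j. Suc q \<le> j \<Longrightarrow> j < Suc q + k \<Longrightarrow> t \<noteq> Blue j" for t
    unfolding s'_def using that by (intro run_ops_unchanged) (auto simp: set_row_ops)
  have "s' (Red i) \<le> 1 / (real k + 1)" if "1 \<le> i" "i \<le> Suc q" for i
    using sweep(1) unchanged[of "Red i"] inv that
    by (cases "i = Suc q") (auto simp: window_invariant_def)
  moreover have "s' (Red i) \<le> 1" if "Suc q < i" for i
    using unchanged[of "Red i"] inv that by (auto simp: window_invariant_def)
  moreover have "s' (Blue j) \<le> max 0 ((real (Suc q + k) - real j) / (real k + 1))"
    if "Suc q < j" for j
  proof (cases "j < Suc q + k")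
    case True
    then show ?thesis using sweep(2)[of j] that by simp
  next
    case False
    then have "s' (Blue j) = s (Blue j)" by (intro unchanged) auto
    also have "\<dots> \<le> max 0 ((real (q + k) - real j) / (real k + 1))"
      using inv that unfolding window_invariant_def by simp
    also have "\<dots> \<le> max 0 ((real (Suc q + k) - real j) / (real k + 1))"
      by (intro max.mono divide_right_mono) auto
    finally show ?thesis .
  qed
  ultimately show ?thesis
    unfolding s'_def[symmetric] window_invariant_def by blast
qed

lemma window_invariant_rows:
  "window_invariant k q (run_ops (init_state n) (concat (map (\<lambda>i. row_ops i k) [1..<q + 1])))"
proof (induction q)
  case 0
  then show ?case by (simp add: run_ops_def window_invariant_init)
next
  case (Suc q)
  then show ?case by (simp add: run_ops_append window_invariant_step)
qed

lemma window_invariant_moving_window: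
  assumes "k \<le> n"
  shows "window_invariant k (n - k + 1) (moving_window n k)"
  using window_invariant_rows[of k "n - k + 1" n] assms
  by (simp add: moving_window_def moving_window_ops_def row_ops_def Suc_diff_le)

lemma red_total_le_if_window_invariant:
  assumes "window_invariant k p s" "p \<le> n"
  shows "red_total n s \<le> real p / (real k + 1) + real (n - p)"
proof -
  have "{1..n} = {1..p} \<union> {p<..n}" using assms(2) by auto
  then have "red_total n s = (\<Sum>i = 1..p. s (Red i)) + (\<Sum>i \<in> {p<..n}. s (Red i))"
    by (simp add: red_total_def sum.union_disjoint ivl_disj_int)
  also have "(\<Sum>i = 1..p. s (Red i)) \<le> real p * (1 / (real k + 1))"
    using assms(1) sum_bounded_above[of "{1..p}" "\<lambda>i. s (Red i)" "1 / (real k + 1)"]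
    by (simp add: window_invariant_def)
  also have "(\<Sum>i \<in> {p<..n}. s (Red i)) \<le> real (n - p) * 1"
    using assms(1) sum_bounded_above[of "{p<..n}" "\<lambda>i. s (Red i)" 1]
    by (simp add: window_invariant_def)
  finally show ?thesis by simp
qed

lemma sqrt_add_two_lt:
  fixes x :: real
  assumes "1 \<le> x"
  shows "sqrt (x + 2) < sqrt x + 1"
proof (rule real_less_lsqrt)
  have "1 \<le> sqrt x" using assms by simp
  moreover have "(sqrt x + 1)\<^sup>2 = x + 2 * sqrt x + 1"
    using assms by (simp add: power2_eq_square algebra_simps)
  ultimately show "0 \<le> sqrt x + 1" and "x + 2 < (sqrt x + 1)\<^sup>2" by linarith+
qed

lemma square_divide_add_le:
  fixes r x :: real
  assumes "0 \<le> r" "r \<le> x" "x \<le> r + 1"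
  shows "r\<^sup>2 / x + x \<le> 2 * r + 1"
proof (cases "x = 0")
  case False
  then have "0 < x" using assms by simp
  have "(x - r) * (x - r - 1) \<le> 0"
    using assms by (intro mult_nonneg_nonpos) auto
  then have "r\<^sup>2 + x\<^sup>2 \<le> (2 * r + 1) * x"
    using assms(1) by (simp add: power2_eq_square algebra_simps)
  then show ?thesis
    using \<open>0 < x\<close> by (simp add: power2_eq_square field_simps)
qed (use assms in simp)

lemma window_bound_floor_sqrt_lt:
  fixes n k :: nat
  assumes "1 \<le> n" and k: "k = nat \<lfloor>sqrt (real n + 2)\<rfloor>"
  shows "(real n - real k + 1) / (real k + 1) + (real k - 1) < 2 * sqrt (real n)"
proof -
  define r where "r = sqrt (real n + 2)"
  define x where "x = real k + 1"
  have "real k = of_int \<lfloor>r\<rfloor>" using k by (simp add: r_def)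
  then have "r < x" "x \<le> r + 1"
    unfolding x_def using of_int_floor_le[of r] real_of_int_floor_add_one_gt[of r] by linarith+
  have "(real n - real k + 1) / (real k + 1) + (real k - 1) = r\<^sup>2 / x + x - 3"
    by (simp add: r_def x_def field_simps)
  also have "\<dots> \<le> 2 * r - 2"
    using square_divide_add_le[of r x] \<open>r < x\<close> \<open>x \<le> r + 1\<close> by (simp add: r_def)
  also have "\<dots> < 2 * sqrt (real n)"
    using sqrt_add_two_lt[of "real n"] assms(1) by (simp add: r_def)
  finally show ?thesis .
qed

theorem mainTheorem6:
  fixes n k :: nat
  assumes "1 \<le> n" and "1 \<le> k" and "k \<le> n"
  shows "red_total n (moving_window n k) \<le> (real n - real k + 1) / (real k + 1) + (real k - 1)
         \<and> (k = nat \<lfloor>sqrt (real n + 2)\<rfloor> \<longrightarrow> red_total n (moving_window n k) < 2 * sqrt (real n))"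
proof -
  have "red_total n (moving_window n k) \<le> real (n - k + 1) / (real k + 1) + real (n - (n - k + 1))"
    using assms by (intro red_total_le_if_window_invariant window_invariant_moving_window) auto
  also have "\<dots> = (real n - real k + 1) / (real k + 1) + (real k - 1)"
    using assms by (simp add: of_nat_diff)
  finally show ?thesis
    using window_bound_floor_sqrt_lt[OF assms(1)] by auto
qed

end
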